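(* Consider problem $(\mathcal{P})$ under Assumptions A1 and A2, and let $\{x_k\},\{y_k\},\{d_k\}$ be generated by Algorithm BDCA (see context). Then for every $k$: (i) $\phi(y_k)\le \phi(x_k)-\rho\|d_k\|^2$; (ii) $\phi'(y_k;d_k)\le -\rho\|d_k\|^2$, where $\phi'(y;d)$ denotes the one-sided directional derivative; (iii) if $I(y_k)\subseteq I(x_k)$, then there exists $\delta_k>0$ such that for all $\lambda\in[0,\delta_k]$ one has $y_k+\lambda d_k\in\mathcal{F}$ and $\phi(y_k+\lambda d_k)\le \phi(y_k)-\alpha\lambda^2\|d_k\|^2$. Consequently, the backtracking loop of the algorithm terminates after finitely many reductions.
   Context: Problem $(\mathcal{P})$: minimize $\phi(x):=g(x)-h(x)$ subject to $x\in\mathcal{F}:=\{x\in\mathbb{R}^n:\langle a_i,x\rangle\le b_i,\ i=1,\dots,p\}$, where $g,h:\mathbb{R}^n\to\mathbb{R}\cup\{+\infty\}$ are proper, closed, convex, with conventions $(+\infty)-(+\infty)=+\infty$, $(+\infty)-\lambda=+\infty$, $\lambda-(+\infty)=-\infty$ for real $\lambda$. Assumption A1: $g$ and $h$ are strongly convex on their domains with the same parameter $\rho>0$ (i.e. $g-\frac\rho2\|\cdot\|^2$ and $h-\frac\rho2\|\cdot\|^2$ are convex). Assumption A2: $\partial h(x)\neq\emptyset$ for all $x\in\operatorname{dom}h$; $g$ is continuously differentiable on an open set containing $\operatorname{dom}h$; and $\inf_{x\in\mathcal{F}}\phi(x)>-\infty$. It is implicitly assumed that the iterates below are well defined (they lie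 in $\operatorname{dom}h$). For $\bar x\in\mathcal{F}$, $I(\bar x):=\{i:\langle a_i,\bar x\rangle=b_i\}$. Algorithm BDCA: input $x_0\in\mathcal{F}$, $\alpha>0$, $\beta\in(0,1)$. At iteration $k$: choose $u_k\in\partial h(x_k)$ and let $y_k$ be the unique minimizer of $g(x)-\langle u_k,x\rangle$ over $\mathcal{F}$; set $d_k:=y_k-x_k$; if $d_k=0$ stop and return $x_k$. If $I(y_k)\subseteq I(x_k)$: choose any $\bar\lambda_k\ge 0$, set $\lambda_k:=\bar\lambda_k$ and reduce it (to some value in $[0,\bar\lambda_k]$) so that $y_k+\lambda_kd_k\in\mathcal{F}$; then while $\phi(y_k+\lambda_kd_k)>\phi(y_k)-\alpha\lambda_k^2\|d_k\|^2$, replace $\lambda_k$ by $\beta\lambda_k$. Otherwise set $\lambda_k:=0$. Set $x_{k+1}:=y_k+\lambda_kd_k$ and continue with $k+1$. *)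

theory Defs
  imports "HOL-Analysis.Analysis" "HOL-Library.Extended_Real"
begin

text \<open>Isabelle's ereal subtraction satisfies exactly the paper's conventions:
  (+\<infinity>) - (+\<infinity>) = +\<infinity>, (+\<infinity>) - c = +\<infinity>, c - (+\<infinity>) = -\<infinity>.\<close>

definition edom :: "('a \<Rightarrow> ereal) \<Rightarrow> 'a set" where
  "edom f = {x. f x < \<infinity>}"

definition proper_fun :: "('a \<Rightarrow> ereal) \<Rightarrow> bool" where
  "proper_fun f \<longleftrightarrow> (\<forall>x. f x \<noteq> -\<infinity>) \<and> (\<exists>x. f x \<noteq> \<infinity>)"

definition epigraph :: "('a \<Rightarrow> ereal) \<Rightarrow> ('a \<times> real) set" where
  "epigraph f = {(x, t). f x \<le> ereal t}"

definition closed_fun :: "('a::topological_space \<Rightarrow> ereal) \<Rightarrow> bool" where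
  "closed_fun f \<longleftrightarrow> closed (epigraph f)"

definition convex_fun :: "('a::real_vector \<Rightarrow> ereal) \<Rightarrow> bool" where
  "convex_fun f \<longleftrightarrow> convex (epigraph f)"

definition strongly_convex_fun :: "('a::real_normed_vector \<Rightarrow> ereal) \<Rightarrow> real \<Rightarrow> bool" where
  "strongly_convex_fun f \<rho> \<longleftrightarrow> convex_fun (\<lambda>x. f x - ereal (\<rho> / 2 * (norm x)\<^sup>2))"

definition subdiff :: "('a::real_inner \<Rightarrow> ereal) \<Rightarrow> 'a \<Rightarrow> 'a set" where
  "subdiff f x = {v. \<forall>z. f x + ereal (v \<bullet> (z - x)) \<le> f z}"

definition C1_near :: "('a::real_inner \<Rightarrow> ereal) \<Rightarrow> 'a set \<Rightarrow> bool" where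
  "C1_near f S \<longleftrightarrow> (\<exists>U grad. open U \<and> S \<subseteq> U \<and> (\<forall>x\<in>U. \<bar>f x\<bar> \<noteq> \<infinity>) \<and>
      (\<forall>x\<in>U. ((\<lambda>z. real_of_ereal (f z)) has_derivative (\<lambda>v. grad x \<bullet> v)) (at x)) \<and>
      continuous_on U grad)"

definition phi :: "('a \<Rightarrow> ereal) \<Rightarrow> ('a \<Rightarrow> ereal) \<Rightarrow> 'a \<Rightarrow> ereal" where
  "phi g h x = g x - h x"

definition polyF :: "(nat \<Rightarrow> 'a::real_inner) \<Rightarrow> (nat \<Rightarrow> real) \<Rightarrow> nat \<Rightarrow> 'a set" where
  "polyF a b p = {x. \<forall>i<p. a i \<bullet> x \<le> b i}"

definition active :: "(nat \<Rightarrow> 'a::real_inner) \<Rightarrow> (nat \<Rightarrow> real) \<Rightarrow> nat \<Rightarrow> 'a \<Rightarrow> nat set" where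
  "active a b p x = {i. i < p \<and> a i \<bullet> x = b i}"

definition has_dir_deriv :: "('a::real_vector \<Rightarrow> ereal) \<Rightarrow> 'a \<Rightarrow> 'a \<Rightarrow> ereal \<Rightarrow> bool" where
  "has_dir_deriv f x v L \<longleftrightarrow>
     ((\<lambda>t::real. (f (x + t *\<^sub>R v) - f x) / ereal t) \<longlongrightarrow> L) (at_right 0)"

text \<open>One iteration k of BDCA (only required while the algorithm has not stopped).\<close>
definition bdca_iter ::
  "('a::real_inner \<Rightarrow> ereal) \<Rightarrow> ('a \<Rightarrow> ereal) \<Rightarrow> (nat \<Rightarrow> 'a) \<Rightarrow> (nat \<Rightarrow> real) \<Rightarrow> nat \<Rightarrow>
   real \<Rightarrow> real \<Rightarrow> (nat \<Rightarrow> 'a) \<Rightarrow> (nat \<Rightarrow> 'a) \<Rightarrow> (nat \<Rightarrow> 'a) \<Rightarrow> (nat \<Rightarrow> 'a) \<Rightarrow> (nat \<Rightarrow> real) \<Rightarrow>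
   nat \<Rightarrow> bool" where
  "bdca_iter g h a b p \<alpha> \<beta> x y d u lam k \<longleftrightarrow>
     x k \<in> edom h \<and> y k \<in> edom h \<and>
     u k \<in> subdiff h (x k) \<and>
     {z \<in> polyF a b p. \<forall>w\<in>polyF a b p. g z - ereal (u k \<bullet> z) \<le> g w - ereal (u k \<bullet> w)} = {y k} \<and>
     d k = y k - x k \<and>
     (d k \<noteq> 0 \<longrightarrow>
        x (Suc k) = y k + lam k *\<^sub>R d k \<and>
        (if active a b p (y k) \<subseteq> active a b p (x k) then
           (\<exists>lam0 n. lam0 \<ge> 0 \<and> y k + lam0 *\<^sub>R d k \<in> polyF a b p \<and> lam k = \<beta> ^ n * lam0 \<and>
              phi g h (y k + lam k *\<^sub>R d k) \<le> phi g h (y k) - ereal (\<alpha> * (lam k)\<^sup>2 * (norm (d k))\<^sup>2) \<and>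
              (\<forall>m<n. phi g h (y k + (\<beta> ^ m * lam0) *\<^sub>R d k) >
                        phi g h (y k) - ereal (\<alpha> * (\<beta> ^ m * lam0)\<^sup>2 * (norm (d k))\<^sup>2)))
         else lam k = 0))"

end

theory Submission
  imports Defs
begin

text \<open>Strong convexity of g at the minimiser y of g - <u,.> over the polyhedron, and of h at
  x with subgradient u, give g x \<ge> g y + <u, x - y> + \<rho>/2 |d|^2 and
  h y \<ge> h x + <u, d> + \<rho>/2 |d|^2; adding them is (i).
  The directional derivative of \<phi> at y along d is <\<nabla>g y, d> - h'(y; d). First-order optimality
  of y gives <\<nabla>g y, d> \<le> <u, d>, and for a subgradient w of h at y the quotients of h
  decrease monotonically to h'(y; d) \<ge> <w, d> \<ge> <u, d> + \<rho> |d|^2 by strong monotonicity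
  of the subdifferential; this is (ii). A directional derivative below -\<rho> |d|^2 forces a
  decrease faster than any \<alpha> t^2 for small steps t, and if I(y) \<subseteq> I(x) the constraints
  active at y are constant along d while the others stay slack, so small steps remain
  feasible; this is (iii).\<close>

section \<open>Strong convexity\<close>

lemma norm_convex_combination_sq:
  fixes x y :: "'a::real_inner"
  shows "(1 - t) * (norm x)\<^sup>2 + t * (norm y)\<^sup>2 - (norm ((1 - t) *\<^sub>R x + t *\<^sub>R y))\<^sup>2
       = (1 - t) * t * (norm (x - y))\<^sup>2"
  unfolding power2_norm_eq_inner
  by (simp add: inner_add_left inner_add_right inner_diff_left inner_diff_right inner_commute
      algebra_simps power2_eq_square)

lemma strongly_convex_funD:
  fixes f :: "'a::real_inner \<Rightarrow> ereal"
  assumes sc: "strongly_convex_fun f \<rho>" and fx: "f x = ereal fx" and fy: "f y = ereal fy"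
    and t: "0 \<le> t" "t \<le> 1"
  shows "f ((1 - t) *\<^sub>R x + t *\<^sub>R y) \<le> ereal ((1 - t) * fx + t * fy - \<rho>/2 * (1 - t) * t * (norm (x - y))\<^sup>2)"
proof -
  define q where "q = (\<lambda>z::'a. \<rho> / 2 * (norm z)\<^sup>2)"
  define F where "F = (\<lambda>z. f z - ereal (q z))"
  define z where "z = (1 - t) *\<^sub>R x + t *\<^sub>R y"
  have cv: "convex (epigraph F)"
    using sc unfolding strongly_convex_fun_def convex_fun_def F_def q_def by simp
  have "(x, fx - q x) \<in> epigraph F" "(y, fy - q y) \<in> epigraph F"
    unfolding epigraph_def F_def using fx fy by simp_all
  from convexD[OF cv this, of "1 - t" t]
  have "f z - ereal (q z) \<le> ereal ((1 - t) * (fx - q x) + t * (fy - q y))"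
    using t unfolding epigraph_def F_def z_def by simp
  then have "f z \<le> ereal ((1 - t) * (fx - q x) + t * (fy - q y) + q z)"
    by (cases "f z") auto
  also have "(1 - t) * (fx - q x) + t * (fy - q y) + q z
      = (1 - t) * fx + t * fy - \<rho>/2 * ((1 - t) * (norm x)\<^sup>2 + t * (norm y)\<^sup>2 - (norm z)\<^sup>2)"
    unfolding q_def by (simp add: field_simps)
  finally show ?thesis
    unfolding z_def norm_convex_combination_sq by (simp add: mult.assoc)
qed

lemma strongly_convex_fun_0: "strongly_convex_fun f 0 \<longleftrightarrow> convex_fun f"
  by (simp add: strongly_convex_fun_def zero_ereal_def[symmetric])

lemma le_of_forall_mult_one_minus_le:
  fixes c A :: real
  assumes "\<And>t. 0 < t \<Longrightarrow> t < 1 \<Longrightarrow> c * (1 - t) \<le> A"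
  shows "c \<le> A"
proof -
  have "((\<lambda>t. c * (1 - t)) \<longlongrightarrow> c * (1 - 0)) (at_right (0::real))"
    by (intro tendsto_intros)
  moreover have "eventually (\<lambda>t. c * (1 - t) \<le> A) (at_right (0::real))"
    unfolding eventually_at_right_field using assms by (intro exI[of _ 1]) auto
  ultimately show ?thesis
    using tendsto_le[OF trivial_limit_at_right_real tendsto_const] by fastforce
qed

lemma strongly_convex_relative_subgradient_ineq:
  fixes f :: "'a::real_inner \<Rightarrow> ereal"
  assumes sc: "strongly_convex_fun f \<rho>" and S: "convex S" "x \<in> S" "y \<in> S"
    and fx: "f x = ereal fx" and fy: "f y = ereal fy"
    and sub: "\<forall>z\<in>S. f x + ereal (u \<bullet> (z - x)) \<le> f z"
  shows "fx + u \<bullet> (y - x) + \<rho>/2 * (norm (y - x))\<^sup>2 \<le> fy"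
proof -
  have "\<rho>/2 * (norm (y - x))\<^sup>2 \<le> fy - fx - u \<bullet> (y - x)"
  proof (rule le_of_forall_mult_one_minus_le)
    fix t :: real assume t: "0 < t" "t < 1"
    define z where "z = (1 - t) *\<^sub>R x + t *\<^sub>R y"
    have "z \<in> S" unfolding z_def using t by (intro convexD[OF S]) auto
    then have lo: "f x + ereal (u \<bullet> (z - x)) \<le> f z" using sub by blast
    have up: "f z \<le> ereal ((1 - t) * fx + t * fy - \<rho>/2 * (1 - t) * t * (norm (x - y))\<^sup>2)"
      unfolding z_def using t by (intro strongly_convex_funD[OF sc fx fy]) auto
    have "z - x = t *\<^sub>R (y - x)" unfolding z_def by (simp add: algebra_simps)
    then have "fx + t * (u \<bullet> (y - x)) \<le> (1 - t) * fx + t * fy - \<rho>/2 * (1 - t) * t * (norm (y - x))\<^sup>2"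
      using order_trans[OF lo up] fx by (simp add: norm_minus_commute)
    then have "t * (\<rho>/2 * (norm (y - x))\<^sup>2 * (1 - t)) \<le> t * (fy - fx - u \<bullet> (y - x))"
      by (simp add: algebra_simps)
    then show "\<rho>/2 * (norm (y - x))\<^sup>2 * (1 - t) \<le> fy - fx - u \<bullet> (y - x)" using t by simp
  qed
  then show ?thesis by simp
qed

lemma minimizer_imp_relative_subgradient:
  assumes fy: "f y = ereal c" and min: "\<forall>z\<in>S. f y - ereal (u \<bullet> y) \<le> f z - ereal (u \<bullet> z)"
  shows "\<forall>z\<in>S. f y + ereal (u \<bullet> (z - y)) \<le> f z"
proof
  fix z assume "z \<in> S"
  then show "f y + ereal (u \<bullet> (z - y)) \<le> f z"
    using min fy by (cases "f z") (auto simp: inner_diff_right)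
qed

lemma subdiff_strongly_monotone:
  fixes h :: "'a::real_inner \<Rightarrow> ereal"
  assumes sc: "strongly_convex_fun h \<rho>" and hx: "h x = ereal hx" and hy: "h y = ereal hy"
    and v: "v \<in> subdiff h x" and w: "w \<in> subdiff h y"
  shows "\<rho> * (norm (y - x))\<^sup>2 \<le> (w - v) \<bullet> (y - x)"
proof -
  have "hx + v \<bullet> (y - x) + \<rho>/2 * (norm (y - x))\<^sup>2 \<le> hy"
    using v by (intro strongly_convex_relative_subgradient_ineq[OF sc convex_UNIV _ _ hx hy])
      (auto simp: subdiff_def)
  moreover have "hy + w \<bullet> (x - y) + \<rho>/2 * (norm (x - y))\<^sup>2 \<le> hx"
    using w by (intro strongly_convex_relative_subgradient_ineq[OF sc convex_UNIV _ _ hy hx])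
      (auto simp: subdiff_def)
  ultimately show ?thesis
    by (simp add: norm_minus_commute inner_diff_left inner_diff_right)
qed

section \<open>One-sided directional derivatives\<close>

lemma eventually_line_in_open:
  fixes y :: "'a::real_normed_vector"
  assumes "open U" "y \<in> U"
  shows "eventually (\<lambda>t. y + t *\<^sub>R v \<in> U) (at_right 0)"
proof -
  have "((\<lambda>t::real. y + t *\<^sub>R v) \<longlongrightarrow> y + 0 *\<^sub>R v) (at_right 0)"
    by (intro tendsto_intros)
  then show ?thesis using topological_tendstoD assms by fastforce
qed

lemma has_derivative_dir_quotient:
  fixes G :: "'a::real_normed_vector \<Rightarrow> real"
  assumes G: "(G has_derivative G') (at y)"
  shows "((\<lambda>t. (G (y + t *\<^sub>R v) - G y) / t) \<longlongrightarrow> G' v) (at_right 0)"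
proof -
  have "((\<lambda>t::real. y + t *\<^sub>R v) has_derivative (\<lambda>t. t *\<^sub>R v)) (at 0)"
    by (auto intro!: derivative_eq_intros)
  from diff_chain_at[OF this] G
  have "((\<lambda>t. G (y + t *\<^sub>R v)) has_derivative (\<lambda>t. G' (t *\<^sub>R v))) (at 0)"
    by (simp add: o_def)
  moreover have "(\<lambda>t. G' (t *\<^sub>R v)) = (*) (G' v)"
    using linear_scale[OF has_derivative_linear[OF G]] by (auto simp: mult.commute)
  ultimately have "((\<lambda>t. G (y + t *\<^sub>R v)) has_field_derivative G' v) (at 0)"
    by (simp add: has_field_derivative_def)
  then show ?thesis
    unfolding has_field_derivative_iff using filterlim_at_split by fastforce
qed

lemma has_derivative_ge_of_eventually_ge:
  fixes G :: "'a::real_normed_vector \<Rightarrow> real"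
  assumes G: "(G has_derivative G') (at y)"
    and ge: "eventually (\<lambda>t. G y + t * c \<le> G (y + t *\<^sub>R v)) (at_right 0)"
  shows "c \<le> G' v"
proof (rule tendsto_le[OF trivial_limit_at_right_real has_derivative_dir_quotient[OF G] tendsto_const])
  show "eventually (\<lambda>t. c \<le> (G (y + t *\<^sub>R v) - G y) / t) (at_right 0)"
    using eventually_conj[OF ge eventually_at_right_less]
    by (rule eventually_mono) (simp add: pos_le_divide_eq mult.commute)
qed

lemma has_dir_deriv_of_has_derivative:
  fixes g :: "'a::real_normed_vector \<Rightarrow> ereal"
  assumes U: "open U" "y \<in> U" "\<forall>z\<in>U. \<bar>g z\<bar> \<noteq> \<infinity>"
    and G: "((\<lambda>z. real_of_ereal (g z)) has_derivative G') (at y)"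
  shows "has_dir_deriv g y v (ereal (G' v))"
proof -
  define G where "G = (\<lambda>z. real_of_ereal (g z))"
  have "((\<lambda>t. ereal ((G (y + t *\<^sub>R v) - G y) / t)) \<longlongrightarrow> ereal (G' v)) (at_right 0)"
    using has_derivative_dir_quotient[OF G[folded G_def]] by (rule tendsto_ereal)
  moreover have "eventually (\<lambda>t. ereal ((G (y + t *\<^sub>R v) - G y) / t) = (g (y + t *\<^sub>R v) - g y) / ereal t)
      (at_right 0)"
    using eventually_conj[OF eventually_line_in_open[OF U(1,2)] eventually_at_right_less]
  proof (rule eventually_mono)
    fix t :: real assume t: "y + t *\<^sub>R v \<in> U \<and> 0 < t"
    then have "g (y + t *\<^sub>R v) = ereal (G (y + t *\<^sub>R v))" "g y = ereal (G y)"
      using U(2,3) unfolding G_def by (auto intro!: ereal_real')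
    then show "ereal ((G (y + t *\<^sub>R v) - G y) / t) = (g (y + t *\<^sub>R v) - g y) / ereal t"
      using t by simp
  qed
  ultimately show ?thesis
    unfolding has_dir_deriv_def by (rule Lim_transform_eventually)
qed

text \<open>The difference quotient of a convex function is monotone in the step, and a subgradient
  bounds it from below; so it converges as the step decreases to 0.\<close>
lemma convex_has_dir_deriv:
  fixes h :: "'a::real_inner \<Rightarrow> ereal"
  assumes cv: "convex_fun h" and hy: "h y = ereal c" and w: "w \<in> subdiff h y"
  shows "\<exists>m. has_dir_deriv h y v m \<and> ereal (w \<bullet> v) \<le> m"
proof -
  define q where "q = (\<lambda>t. (h (y + t *\<^sub>R v) - h y) / ereal t)"
  have sub: "ereal (c + t * (w \<bullet> v)) \<le> h (y + t *\<^sub>R v)" for t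
    using w hy unfolding subdiff_def by (auto elim!: allE[of _ "y + t *\<^sub>R v"])
  have bnd: "ereal (w \<bullet> v) \<le> q t" if "0 < t" for t
  proof (cases "h (y + t *\<^sub>R v)")
    case (real r)
    then show ?thesis using sub[of t] that hy unfolding q_def by (simp add: pos_le_divide_eq mult.commute)
  qed (use sub[of t] that hy in \<open>auto simp: q_def\<close>)
  have mono: "q s \<le> q t" if "0 < s" "s \<le> t" for s t
  proof (cases "h (y + t *\<^sub>R v)")
    case (real r)
    have "h ((1 - s/t) *\<^sub>R y + (s/t) *\<^sub>R (y + t *\<^sub>R v)) \<le> ereal ((1 - s/t) * c + (s/t) * r)"
      using strongly_convex_funD[of h 0, OF _ hy real, of "s/t"] cv that
      by (simp add: strongly_convex_fun_0)
    moreover have "(1 - s/t) *\<^sub>R y + (s/t) *\<^sub>R (y + t *\<^sub>R v) = y + s *\<^sub>R v"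
      using that by (simp add: algebra_simps)
    ultimately have le: "h (y + s *\<^sub>R v) \<le> ereal ((1 - s/t) * c + (s/t) * r)"
      by simp
    show ?thesis
    proof (cases "h (y + s *\<^sub>R v)")
      case (real r')
      with le have "(r' - c) / s \<le> (r - c) / t"
        using that by (simp add: divide_simps algebra_simps)
      with real \<open>h (y + t *\<^sub>R v) = ereal r\<close> show ?thesis using hy that unfolding q_def by simp
    qed (use le sub[of s] in auto)
  qed (use sub[of t] that hy in \<open>auto simp: q_def\<close>)
  have "(q \<longlongrightarrow> Inf (q ` ({0<..} \<inter> UNIV))) (at 0 within ({0<..} \<inter> UNIV))"
    by (rule Lim_right_bound[where K = "ereal (w \<bullet> v)"]) (auto intro: mono bnd)
  moreover have "ereal (w \<bullet> v) \<le> Inf (q ` {0<..})"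
    using bnd by (auto intro: Inf_greatest)
  ultimately show ?thesis unfolding has_dir_deriv_def q_def by auto
qed

lemma has_dir_deriv_phi:
  assumes g: "has_dir_deriv g y v (ereal l)" and h: "has_dir_deriv h y v m"
    and gy: "g y = ereal cg" and hy: "h y = ereal ch"
    and gfin: "eventually (\<lambda>t. \<bar>g (y + t *\<^sub>R v)\<bar> \<noteq> \<infinity>) (at_right 0)"
  shows "has_dir_deriv (phi g h) y v (ereal l - m)"
proof -
  have "((\<lambda>t. (g (y + t *\<^sub>R v) - g y) / ereal t - (h (y + t *\<^sub>R v) - h y) / ereal t)
      \<longlongrightarrow> ereal l - m) (at_right 0)"
    using g h unfolding has_dir_deriv_def by (intro tendsto_diff_ereal_general) auto
  moreover have "eventually (\<lambda>t. (g (y + t *\<^sub>R v) - g y) / ereal t - (h (y + t *\<^sub>R v) - h y) / ereal t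
      = (phi g h (y + t *\<^sub>R v) - phi g h y) / ereal t) (at_right 0)"
    using eventually_conj[OF gfin eventually_at_right_less]
  proof (rule eventually_mono)
    fix t :: real assume t: "\<bar>g (y + t *\<^sub>R v)\<bar> \<noteq> \<infinity> \<and> 0 < t"
    then obtain r where r: "g (y + t *\<^sub>R v) = ereal r" by (cases "g (y + t *\<^sub>R v)") auto
    show "(g (y + t *\<^sub>R v) - g y) / ereal t - (h (y + t *\<^sub>R v) - h y) / ereal t
      = (phi g h (y + t *\<^sub>R v) - phi g h y) / ereal t"
      using t unfolding phi_def r gy hy
      by (cases "h (y + t *\<^sub>R v)") (simp_all add: diff_divide_distrib)
  qed
  ultimately show ?thesis
    unfolding has_dir_deriv_def by (rule Lim_transform_eventually)
qed

lemma has_dir_deriv_eventually_descent: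
  fixes f :: "'a::real_normed_vector \<Rightarrow> ereal"
  assumes L: "has_dir_deriv f y v L" "L \<le> ereal (- \<rho> * (norm v)\<^sup>2)"
    and \<rho>: "\<rho> > 0" and fy: "f y = ereal c"
  shows "eventually (\<lambda>t. f (y + t *\<^sub>R v) \<le> f y - ereal (\<alpha> * t\<^sup>2 * (norm v)\<^sup>2)) (at_right 0)"
proof (cases "v = 0")
  case True
  then show ?thesis by (simp add: fy)
next
  case False
  define \<kappa> where "\<kappa> = \<rho> * (norm v)\<^sup>2 / 2"
  have \<kappa>: "\<kappa> > 0" using False \<rho> by (simp add: \<kappa>_def)
  have "L < ereal (- \<kappa>)" using L(2) \<kappa> by (cases L) (auto simp: \<kappa>_def)
  then have slope: "eventually (\<lambda>t. (f (y + t *\<^sub>R v) - f y) / ereal t < ereal (- \<kappa>)) (at_right 0)"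
    using order_tendstoD(2) L(1) unfolding has_dir_deriv_def by blast
  have "((\<lambda>t. \<alpha> * t * (norm v)\<^sup>2) \<longlongrightarrow> \<alpha> * 0 * (norm v)\<^sup>2) (at_right 0)"
    by (intro tendsto_intros)
  then have small: "eventually (\<lambda>t. \<alpha> * t * (norm v)\<^sup>2 < \<kappa>) (at_right 0)"
    using order_tendstoD(2) \<kappa> by fastforce
  show ?thesis
    using eventually_conj[OF eventually_conj[OF slope small] eventually_at_right_less]
  proof (rule eventually_mono)
    fix t :: real
    assume t: "((f (y + t *\<^sub>R v) - f y) / ereal t < ereal (- \<kappa>) \<and> \<alpha> * t * (norm v)\<^sup>2 < \<kappa>) \<and> 0 < t"
    show "f (y + t *\<^sub>R v) \<le> f y - ereal (\<alpha> * t\<^sup>2 * (norm v)\<^sup>2)"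
    proof (cases "f (y + t *\<^sub>R v)")
      case (real r)
      then have "(r - c) / t < - \<kappa>" using t fy by (auto split: if_splits)
      then have "r - c < - \<kappa> * t" using t by (simp add: pos_divide_less_eq)
      moreover have "t * (\<alpha> * t * (norm v)\<^sup>2) \<le> t * \<kappa>" using t by (intro mult_left_mono) auto
      ultimately show ?thesis using real fy by (simp add: power2_eq_square algebra_simps)
    qed (use t fy in auto)
  qed
qed

section \<open>A step of DCA\<close>

lemma dca_step_descent:
  fixes g h :: "'a::real_inner \<Rightarrow> ereal"
  assumes sc: "strongly_convex_fun g \<rho>" "strongly_convex_fun h \<rho>"
    and S: "convex S" "x \<in> S" "y \<in> S"
    and fin: "g x = ereal gx" "g y = ereal gy" "h x = ereal hx" "h y = ereal hy"
    and v: "v \<in> subdiff h x"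
    and min: "\<forall>z\<in>S. g y - ereal (v \<bullet> y) \<le> g z - ereal (v \<bullet> z)"
  shows "phi g h y \<le> phi g h x - ereal (\<rho> * (norm (y - x))\<^sup>2)"
proof -
  have "gy + v \<bullet> (x - y) + \<rho>/2 * (norm (x - y))\<^sup>2 \<le> gx"
    using minimizer_imp_relative_subgradient[OF fin(2) min]
    by (rule strongly_convex_relative_subgradient_ineq[OF sc(1) S(1,3,2) fin(2,1)])
  moreover have "hx + v \<bullet> (y - x) + \<rho>/2 * (norm (y - x))\<^sup>2 \<le> hy"
    using v by (intro strongly_convex_relative_subgradient_ineq[OF sc(2) convex_UNIV _ _ fin(3,4)])
      (auto simp: subdiff_def)
  ultimately show ?thesis
    unfolding phi_def fin by (simp add: norm_minus_commute inner_diff_right)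
qed

lemma dca_step_dir_deriv:
  fixes g h :: "'a::real_inner \<Rightarrow> ereal"
  assumes sc: "strongly_convex_fun h \<rho>" and cv: "convex_fun h"
    and S: "convex S" "x \<in> S" "y \<in> S"
    and C1: "C1_near g A" "y \<in> A"
    and fin: "h x = ereal hx" "h y = ereal hy"
    and v: "v \<in> subdiff h x" and w: "w \<in> subdiff h y"
    and min: "\<forall>z\<in>S. g y - ereal (v \<bullet> y) \<le> g z - ereal (v \<bullet> z)"
  shows "\<exists>L. has_dir_deriv (phi g h) y (y - x) L \<and> L \<le> ereal (- \<rho> * (norm (y - x))\<^sup>2)"
proof -
  obtain U grad where U: "open U" "y \<in> U" "\<forall>z\<in>U. \<bar>g z\<bar> \<noteq> \<infinity>"
    and "\<forall>z\<in>U. ((\<lambda>z. real_of_ereal (g z)) has_derivative (\<lambda>v. grad z \<bullet> v)) (at z)"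
    using C1 unfolding C1_near_def by blast
  then have G: "((\<lambda>z. real_of_ereal (g z)) has_derivative (\<lambda>v. grad y \<bullet> v)) (at y)"
    by blast
  obtain gy where gy: "g y = ereal gy" using U by (cases "g y") auto
  have sub: "\<forall>z\<in>S. g y + ereal (v \<bullet> (z - y)) \<le> g z"
    using minimizer_imp_relative_subgradient[OF gy min] .
  have "v \<bullet> (x - y) \<le> grad y \<bullet> (x - y)"
  proof (rule has_derivative_ge_of_eventually_ge[OF G])
    have "eventually (\<lambda>t::real. 0 < t \<and> t < 1) (at_right 0)"
      by (auto simp: eventually_at_right_field intro!: exI[of _ 1])
    then show "eventually (\<lambda>t. real_of_ereal (g y) + t * (v \<bullet> (x - y))
        \<le> real_of_ereal (g (y + t *\<^sub>R (x - y)))) (at_right 0)"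
      using eventually_line_in_open[OF U(1,2), of "x - y"]
    proof eventually_elim
      case (elim t)
      have "y + t *\<^sub>R (x - y) = (1 - t) *\<^sub>R y + t *\<^sub>R x" by (simp add: algebra_simps)
      then have "y + t *\<^sub>R (x - y) \<in> S" using elim S by (auto intro!: convexD)
      then show ?case
        using sub U(3) elim gy by (cases "g (y + t *\<^sub>R (x - y))") (auto simp: inner_simps)
    qed
  qed
  then have first_order: "grad y \<bullet> (y - x) \<le> v \<bullet> (y - x)"
    by (simp add: inner_diff_right)
  obtain m where m: "has_dir_deriv h y (y - x) m" "ereal (w \<bullet> (y - x)) \<le> m"
    using convex_has_dir_deriv[OF cv fin(2) w] by blast
  have monotone: "\<rho> * (norm (y - x))\<^sup>2 \<le> (w - v) \<bullet> (y - x)"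
    by (rule subdiff_strongly_monotone[OF sc fin v w])
  have "ereal (grad y \<bullet> (y - x)) - m \<le> ereal (grad y \<bullet> (y - x)) - ereal (w \<bullet> (y - x))"
    using m(2) by (rule ereal_minus_mono[OF order_refl])
  also have "\<dots> \<le> ereal (- \<rho> * (norm (y - x))\<^sup>2)"
    using first_order monotone by (simp add: inner_diff_left)
  finally have "ereal (grad y \<bullet> (y - x)) - m \<le> ereal (- \<rho> * (norm (y - x))\<^sup>2)" .
  moreover have "has_dir_deriv (phi g h) y (y - x) (ereal (grad y \<bullet> (y - x)) - m)"
    using eventually_line_in_open[OF U(1,2), of "y - x"]
    by (intro has_dir_deriv_phi[OF has_dir_deriv_of_has_derivative[OF U G] m(1) gy fin(2)])
      (auto elim!: eventually_mono dest: bspec[OF U(3)])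
  ultimately show ?thesis by blast
qed

section \<open>Polyhedral feasibility and backtracking\<close>

lemma convex_polyF: "convex (polyF a b p)"
proof -
  have "polyF a b p = (\<Inter>i<p. {x. a i \<bullet> x \<le> b i})"
    unfolding polyF_def by auto
  then show ?thesis by (auto intro!: convex_INT convex_halfspace_le)
qed

lemma eventually_in_polyF_if_active_subset:
  assumes y: "y \<in> polyF a b p" and act: "active a b p y \<subseteq> active a b p x"
  shows "eventually (\<lambda>t. y + t *\<^sub>R (y - x) \<in> polyF a b p) (at_right 0)"
proof -
  have "eventually (\<lambda>t. a i \<bullet> (y + t *\<^sub>R (y - x)) \<le> b i) (at_right 0)" if i: "i < p" for i
  proof (cases "a i \<bullet> y = b i")
    case True
    then have "a i \<bullet> x = b i" using act i unfolding active_def by auto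
    with True show ?thesis by (simp add: inner_simps)
  next
    case False
    then have "a i \<bullet> y < b i" using y i unfolding polyF_def by force
    moreover have "((\<lambda>t. a i \<bullet> (y + t *\<^sub>R (y - x))) \<longlongrightarrow> a i \<bullet> (y + 0 *\<^sub>R (y - x))) (at_right 0)"
      by (intro tendsto_intros)
    ultimately have "eventually (\<lambda>t. a i \<bullet> (y + t *\<^sub>R (y - x)) < b i) (at_right 0)"
      by (simp add: order_tendstoD(2))
    then show ?thesis by (rule eventually_mono) simp
  qed
  then have "eventually (\<lambda>t. \<forall>i\<in>{..<p}. a i \<bullet> (y + t *\<^sub>R (y - x)) \<le> b i) (at_right 0)"
    by (intro eventually_ball_finite) auto
  then show ?thesis unfolding polyF_def by (rule eventually_mono) auto
qed

lemma eventually_at_right_0_imp_interval: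
  fixes P :: "real \<Rightarrow> bool"
  assumes "eventually P (at_right 0)" "P 0"
  shows "\<exists>\<delta>>0. \<forall>t\<in>{0..\<delta>}. P t"
proof -
  obtain e where "e > 0" "\<And>t. 0 < t \<Longrightarrow> t < e \<Longrightarrow> P t"
    using assms(1) unfolding eventually_at_right_field by auto
  then show ?thesis using assms(2) by (intro exI[of _ "e/2"]) (auto simp: order_le_less)
qed

lemma exists_power_mult_in_interval:
  fixes \<beta> \<delta> s :: real
  assumes "0 < \<delta>" "0 \<le> s" "0 < \<beta>" "\<beta> < 1"
  shows "\<exists>n. \<beta> ^ n * s \<in> {0..\<delta>}"
proof -
  have "(\<lambda>n. \<beta> ^ n * s) \<longlonglongrightarrow> 0 * s"
    using assms by (intro tendsto_intros LIMSEQ_power_zero) auto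
  then obtain n where "\<beta> ^ n * s < \<delta>"
    using order_tendstoD(2)[of _ 0 sequentially \<delta>] assms(1) eventually_sequentially by force
  then show ?thesis using assms by (intro exI[of _ n]) auto
qed

lemma descent_line_search_in_polyF:
  fixes f :: "'a::real_inner \<Rightarrow> ereal"
  assumes L: "has_dir_deriv f y (y - x) L" "L \<le> ereal (- \<rho> * (norm (y - x))\<^sup>2)"
    and \<rho>: "\<rho> > 0" and fy: "f y = ereal c"
    and y: "y \<in> polyF a b p" and act: "active a b p y \<subseteq> active a b p x"
    and \<beta>: "0 < \<beta>" "\<beta> < 1"
  shows "(\<exists>\<delta>>0. \<forall>t\<in>{0..\<delta>}. y + t *\<^sub>R (y - x) \<in> polyF a b p \<and>
           f (y + t *\<^sub>R (y - x)) \<le> f y - ereal (\<alpha> * t\<^sup>2 * (norm (y - x))\<^sup>2))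
       \<and> (\<forall>s\<ge>0. y + s *\<^sub>R (y - x) \<in> polyF a b p \<longrightarrow>
           (\<exists>n. f (y + (\<beta> ^ n * s) *\<^sub>R (y - x))
                  \<le> f y - ereal (\<alpha> * (\<beta> ^ n * s)\<^sup>2 * (norm (y - x))\<^sup>2)))"
proof -
  have "eventually (\<lambda>t. y + t *\<^sub>R (y - x) \<in> polyF a b p \<and>
      f (y + t *\<^sub>R (y - x)) \<le> f y - ereal (\<alpha> * t\<^sup>2 * (norm (y - x))\<^sup>2)) (at_right 0)"
    by (intro eventually_conj eventually_in_polyF_if_active_subset[OF y act]
        has_dir_deriv_eventually_descent[OF L \<rho> fy])
  then have "\<exists>\<delta>>0. \<forall>t\<in>{0..\<delta>}. y + t *\<^sub>R (y - x) \<in> polyF a b p \<and>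
      f (y + t *\<^sub>R (y - x)) \<le> f y - ereal (\<alpha> * t\<^sup>2 * (norm (y - x))\<^sup>2)"
    by (rule eventually_at_right_0_imp_interval) (simp add: y)
  then show ?thesis
    using exists_power_mult_in_interval[OF _ _ \<beta>] by meson
qed

section \<open>BDCA\<close>

lemma edom_finite_values:
  fixes g h :: "'a::real_inner \<Rightarrow> ereal"
  assumes "proper_fun h" "C1_near g (edom h)" "z \<in> edom h"
  shows "\<exists>gz hz. g z = ereal gz \<and> h z = ereal hz"
proof -
  obtain U where "edom h \<subseteq> U" "\<forall>x\<in>U. \<bar>g x\<bar> \<noteq> \<infinity>"
    using assms(2) unfolding C1_near_def by blast
  then have "\<bar>g z\<bar> \<noteq> \<infinity>" using assms(3) by (metis subsetD)
  moreover have "\<bar>h z\<bar> \<noteq> \<infinity>" using assms(1,3) unfolding proper_fun_def edom_def by auto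
  ultimately show ?thesis by (intro exI[of _ "real_of_ereal (g z)"] exI[of _ "real_of_ereal (h z)"])
      (simp add: ereal_real')
qed

lemma bdca_iterD:
  assumes "bdca_iter g h a b p \<alpha> \<beta> x y d u lam k"
  shows "x k \<in> edom h" "y k \<in> edom h" "u k \<in> subdiff h (x k)" "d k = y k - x k"
    and "y k \<in> polyF a b p"
    and "\<forall>z\<in>polyF a b p. g (y k) - ereal (u k \<bullet> y k) \<le> g z - ereal (u k \<bullet> z)"
    and "d k \<noteq> 0 \<Longrightarrow> x (Suc k) = y k + lam k *\<^sub>R d k"
    and "d k \<noteq> 0 \<Longrightarrow> active a b p (y k) \<subseteq> active a b p (x k) \<Longrightarrow>
           \<exists>lam0 n. y k + lam0 *\<^sub>R d k \<in> polyF a b p \<and> lam k = \<beta> ^ n * lam0"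
    and "d k \<noteq> 0 \<Longrightarrow> \<not> active a b p (y k) \<subseteq> active a b p (x k) \<Longrightarrow> lam k = 0"
proof -
  note def = assms[unfolded bdca_iter_def]
  have "{z \<in> polyF a b p. \<forall>w\<in>polyF a b p. g z - ereal (u k \<bullet> z) \<le> g w - ereal (u k \<bullet> w)} = {y k}"
    using def by argo
  then have "y k \<in> {z \<in> polyF a b p. \<forall>w\<in>polyF a b p. g z - ereal (u k \<bullet> z) \<le> g w - ereal (u k \<bullet> w)}"
    by simp
  then show "y k \<in> polyF a b p"
    and "\<forall>z\<in>polyF a b p. g (y k) - ereal (u k \<bullet> y k) \<le> g z - ereal (u k \<bullet> z)"
    by simp_all
  show "x k \<in> edom h" "y k \<in> edom h" "u k \<in> subdiff h (x k)" "d k = y k - x k"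
    using def by argo+
  show "d k \<noteq> 0 \<Longrightarrow> x (Suc k) = y k + lam k *\<^sub>R d k"
    using def by argo
  show "d k \<noteq> 0 \<Longrightarrow> \<not> active a b p (y k) \<subseteq> active a b p (x k) \<Longrightarrow> lam k = 0"
    using def by argo
  show "d k \<noteq> 0 \<Longrightarrow> active a b p (y k) \<subseteq> active a b p (x k) \<Longrightarrow>
           \<exists>lam0 n. y k + lam0 *\<^sub>R d k \<in> polyF a b p \<and> lam k = \<beta> ^ n * lam0"
    using def by (metis (no_types))
qed

lemma bdca_iterate_feasible:
  assumes iter: "\<And>k. (\<forall>j<k. d j \<noteq> 0) \<Longrightarrow> bdca_iter g h a b p \<alpha> \<beta> x y d u lam k"
    and x0: "x 0 \<in> polyF a b p" and \<beta>: "0 < \<beta>" "\<beta> < 1"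
  shows "(\<forall>j<k. d j \<noteq> 0) \<Longrightarrow> x k \<in> polyF a b p"
proof (induction k)
  case 0
  then show ?case using x0 by simp
next
  case (Suc k)
  then have it: "bdca_iter g h a b p \<alpha> \<beta> x y d u lam k" and dk: "d k \<noteq> 0"
    using iter by auto
  have yF: "y k \<in> polyF a b p" and xs: "x (Suc k) = y k + lam k *\<^sub>R d k"
    using bdca_iterD(5)[OF it] bdca_iterD(7)[OF it dk] by blast+
  show ?case
  proof (cases "active a b p (y k) \<subseteq> active a b p (x k)")
    case True
    then obtain lam0 n where lam0: "y k + lam0 *\<^sub>R d k \<in> polyF a b p" "lam k = \<beta> ^ n * lam0"
      using bdca_iterD(8)[OF it dk True] by blast
    have "0 \<le> \<beta> ^ n" "\<beta> ^ n \<le> 1" using \<beta> by (auto intro: power_le_one)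
    then have "(1 - \<beta> ^ n) *\<^sub>R y k + \<beta> ^ n *\<^sub>R (y k + lam0 *\<^sub>R d k) \<in> polyF a b p"
      by (intro convexD[OF convex_polyF yF lam0(1)]) auto
    then show ?thesis unfolding xs lam0(2) by (simp add: algebra_simps)
  next
    case False
    then have "lam k = 0" using bdca_iterD(9)[OF it dk] by blast
    then show ?thesis using xs yF by simp
  qed
qed

theorem proposition3p2:
  fixes g h :: "'a::euclidean_space \<Rightarrow> ereal"
    and a :: "nat \<Rightarrow> 'a" and b :: "nat \<Rightarrow> real" and p :: nat
    and \<rho> \<alpha> \<beta> :: real
    and x y d u :: "nat \<Rightarrow> 'a" and lam :: "nat \<Rightarrow> real"
  assumes g_pcc: "proper_fun g" "closed_fun g" "convex_fun g"
    and h_pcc: "proper_fun h" "closed_fun h" "convex_fun h"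
    and A1: "\<rho> > 0" "strongly_convex_fun g \<rho>" "strongly_convex_fun h \<rho>"
    and A2: "\<forall>z\<in>edom h. subdiff h z \<noteq> {}" "C1_near g (edom h)"
            "(INF z\<in>polyF a b p. phi g h z) > -\<infinity>"
    and params: "\<alpha> > 0" "0 < \<beta>" "\<beta> < 1"
    and x0: "x 0 \<in> polyF a b p"
    and iter: "\<And>k. (\<forall>j<k. d j \<noteq> 0) \<Longrightarrow> bdca_iter g h a b p \<alpha> \<beta> x y d u lam k"
    and running: "\<forall>j<k. d j \<noteq> 0"
  shows "phi g h (y k) \<le> phi g h (x k) - ereal (\<rho> * (norm (d k))\<^sup>2)
       \<and> (\<exists>L. has_dir_deriv (phi g h) (y k) (d k) L \<and> L \<le> ereal (- \<rho> * (norm (d k))\<^sup>2))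
       \<and> (active a b p (y k) \<subseteq> active a b p (x k) \<longrightarrow>
            (\<exists>\<delta>>0. \<forall>t\<in>{0..\<delta>}. y k + t *\<^sub>R d k \<in> polyF a b p \<and>
                 phi g h (y k + t *\<^sub>R d k) \<le> phi g h (y k) - ereal (\<alpha> * t\<^sup>2 * (norm (d k))\<^sup>2))
          \<and> (\<forall>lam0\<ge>0. y k + lam0 *\<^sub>R d k \<in> polyF a b p \<longrightarrow>
               (\<exists>n. phi g h (y k + (\<beta> ^ n * lam0) *\<^sub>R d k)
                      \<le> phi g h (y k) - ereal (\<alpha> * (\<beta> ^ n * lam0)\<^sup>2 * (norm (d k))\<^sup>2))))"
proof -
  have it: "bdca_iter g h a b p \<alpha> \<beta> x y d u lam k" using iter running by blast
  note iterD = bdca_iterD[OF it]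
  have xF: "x k \<in> polyF a b p" using bdca_iterate_feasible[OF iter x0 params(2,3) running] .
  obtain gx gy hx hy where fin: "g (x k) = ereal gx" "g (y k) = ereal gy"
    "h (x k) = ereal hx" "h (y k) = ereal hy"
    using edom_finite_values[OF h_pcc(1) A2(2)] iterD(1,2) by metis
  obtain w where w: "w \<in> subdiff h (y k)" using A2(1) iterD(2) by blast
  have descent: "phi g h (y k) \<le> phi g h (x k) - ereal (\<rho> * (norm (d k))\<^sup>2)"
    unfolding iterD(4) by (rule dca_step_descent[OF A1(2,3) convex_polyF xF iterD(5) fin iterD(3,6)])
  obtain L where L: "has_dir_deriv (phi g h) (y k) (d k) L" "L \<le> ereal (- \<rho> * (norm (d k))\<^sup>2)"
    using dca_step_dir_deriv[OF A1(3) h_pcc(3) convex_polyF xF iterD(5) A2(2) iterD(2) fin(3,4)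
        iterD(3) w iterD(6)]
    unfolding iterD(4) by blast
  have "phi g h (y k) = ereal (gy - hy)" unfolding phi_def fin by simp
  from descent_line_search_in_polyF[OF L[unfolded iterD(4)] A1(1) this iterD(5) _ params(2,3)]
  show ?thesis using descent L unfolding iterD(4) by blast
qed

end
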